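(* Let $n\ge 2$ and let $(G(k))_{k\in\mathbb{N}}$ be a sequence of digraphs on $\mathcal{V}=\{1,\dots,n\}$ with knowledge sets evolving by the flooding update described in the context. Fix a node $w\in\mathcal{V}$. Suppose that for every $k\in\{0,1,\dots,n-2\}$ there exists an output-cord $\mathcal{O}^w(k)$ from node $w$ at time $k$ with $|\mathcal{O}^w(k)|\ge k+1$. Then for every $k\in\{0,1,\dots,n-2\}$, $|\{i\in\mathcal{V} : d_w\in\mathcal{K}_i(k+1)\}|\ge k+2$.
   Context: Network: $\mathcal{V}=\{1,\dots,n\}$; node $i$ holds initial data $d_i\in\mathbb{R}$, pairwise distinct. At discrete times $k\in\mathbb{N}$ communication follows digraph $G(k)=(\mathcal{V},\mathcal{E}(k))$; node $i$ sends to $j$ at time $k$ iff $(i,j)\in\mathcal{E}(k)$. Knowledge sets: $\mathcal{K}_i(0)=\{d_i\}$ and $\mathcal{K}_j(k+1)=\mathcal{K}_j(k)\cup\bigcup_{i:(i,j)\in\mathcal{E}(k)}\mathcal{K}_i(k)$. Output-cord: an output-cord from node $i$ at time $k$ is an ordered list $\mathcal{O}^i(k)=(\mathcal{O}^i_1,\dots,\mathcal{O}^i_m)$ of pairwise distinct nodes of $\mathcal{V}\setminus\{i\}$ such that $(\mathcal{O}^i_{j+1},\mathcal{O}^i_j)\in\mathcal{E}(k)$ for all $j\in\{1,\dots,m-1\}$ and $(i,\mathcal{O}^i_m)\in\mathcal{E}(k)$; its cardinality is $|\mathcal{O}^i(k)|=m$. *)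

theory Defs
  imports Main "HOL.Real"
begin

fun knowledge :: "(nat \<Rightarrow> (nat \<times> nat) set) \<Rightarrow> (nat \<Rightarrow> real) \<Rightarrow> nat \<Rightarrow> nat \<Rightarrow> real set" where
  "knowledge E d 0 j = {d j}"
| "knowledge E d (Suc k) j = knowledge E d k j \<union> (\<Union>i\<in>{i. (i, j) \<in> E k}. knowledge E d k i)"

definition output_cord :: "nat set \<Rightarrow> (nat \<Rightarrow> (nat \<times> nat) set) \<Rightarrow> nat \<Rightarrow> nat \<Rightarrow> nat list \<Rightarrow> bool" where
  "output_cord V E w k cs \<longleftrightarrow>
     cs \<noteq> [] \<and> distinct cs \<and> set cs \<subseteq> V - {w} \<and>
     (\<forall>j. Suc j < length cs \<longrightarrow> (cs ! Suc j, cs ! j) \<in> E k) \<and>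
     (w, last cs) \<in> E k"

end

theory Submission
  imports Defs
begin

text \<open>Along an
  output-cord the edges point back towards \<open>w\<close>, so the last uninformed node of the cord has an
  informed in-neighbour (its successor on the cord, or \<open>w\<close> itself). Hence at every step either
  the informed set grows by one, or it already contains \<open>w\<close> and the whole cord; with cords of
  length \<open>k + 1\<close> at time \<open>k\<close> both alternatives give \<open>k + 2\<close> informed nodes at time \<open>k + 1\<close>.\<close>

definition informed :: "nat set \<Rightarrow> (nat \<Rightarrow> (nat \<times> nat) set) \<Rightarrow> (nat \<Rightarrow> real) \<Rightarrow> nat \<Rightarrow> nat \<Rightarrow> nat set" where
  "informed V E d w k = {i \<in> V. d w \<in> knowledge E d k i}"

lemma own_data_in_knowledge: "d w \<in> knowledge E d k w"
  by (induction k) auto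

lemma knowledge_Suc_if_edge:
  "(i, j) \<in> E k \<Longrightarrow> x \<in> knowledge E d k i \<Longrightarrow> x \<in> knowledge E d (Suc k) j"
  by auto

lemma informed_mono_Suc: "informed V E d w k \<subseteq> informed V E d w (Suc k)"
  unfolding informed_def by auto

lemma source_informed: "w \<in> V \<Longrightarrow> w \<in> informed V E d w k"
  unfolding informed_def by (simp add: own_data_in_knowledge)

lemma output_cord_edge_into_complement:
  assumes cord: "output_cord V E w k cs" and "w \<in> S" and "\<not> set cs \<subseteq> S"
  shows "\<exists>x \<in> set cs - S. \<exists>y \<in> S. (y, x) \<in> E k"
proof -
  have ne: "cs \<noteq> []"
    and edge: "\<And>j. Suc j < length cs \<Longrightarrow> (cs ! Suc j, cs ! j) \<in> E k"
    and last_edge: "(w, last cs) \<in> E k"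
    using cord unfolding output_cord_def by auto
  define J where "J = {j. j < length cs \<and> cs ! j \<notin> S}"
  have "J \<noteq> {}" using \<open>\<not> set cs \<subseteq> S\<close> by (auto simp: J_def in_set_conv_nth)
  moreover have "finite J" by (simp add: J_def)
  ultimately have j: "Max J \<in> J" and above: "\<And>i. i \<in> J \<Longrightarrow> i \<le> Max J" by auto
  let ?j = "Max J"
  have x: "cs ! ?j \<in> set cs - S" using j by (simp add: J_def)
  show ?thesis
  proof (cases "Suc ?j < length cs")
    case True
    have "Suc ?j \<notin> J" using above[of "Suc ?j"] by auto
    then have "cs ! Suc ?j \<in> S" using True by (simp add: J_def)
    with x edge[OF True] show ?thesis by blast
  next
    case False
    moreover have "?j < length cs" using j by (simp add: J_def)
    ultimately have "?j = length cs - 1" by linarith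
    then have "cs ! ?j = last cs" using ne by (simp add: last_conv_nth)
    with x last_edge \<open>w \<in> S\<close> show ?thesis by metis
  qed
qed

lemma informed_card_Suc:
  assumes cord: "output_cord V E w k cs" and "finite V" and "w \<in> V"
  shows "min (card (informed V E d w k) + 1) (length cs + 1) \<le> card (informed V E d w (Suc k))"
proof -
  let ?S = "informed V E d w k" and ?T = "informed V E d w (Suc k)"
  have "finite ?T" using \<open>finite V\<close> by (simp add: informed_def)
  have wS: "w \<in> ?S" using \<open>w \<in> V\<close> by (rule source_informed)
  show ?thesis
  proof (cases "set cs \<subseteq> ?S")
    case True
    have "distinct cs" and "w \<notin> set cs" using cord by (auto simp: output_cord_def)
    then have "card (insert w (set cs)) = length cs + 1" by (simp add: distinct_card)
    moreover have "insert w (set cs) \<subseteq> ?T" using True wS informed_mono_Suc by blast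
    ultimately have "length cs + 1 \<le> card ?T" using card_mono[OF \<open>finite ?T\<close>] by metis
    then show ?thesis by simp
  next
    case False
    then obtain x y where x: "x \<in> set cs - ?S" and y: "y \<in> ?S" and xy: "(y, x) \<in> E k"
      using output_cord_edge_into_complement[OF cord wS] by blast
    have "x \<in> V" using x cord by (auto simp: output_cord_def)
    moreover have "d w \<in> knowledge E d (Suc k) x"
      using knowledge_Suc_if_edge[where E = E and k = k, OF xy] y by (simp add: informed_def)
    ultimately have "x \<in> ?T" by (simp add: informed_def)
    then have "insert x ?S \<subseteq> ?T" using informed_mono_Suc by blast
    moreover have "finite ?S" using \<open>finite ?T\<close> informed_mono_Suc by (rule finite_subset[rotated])
    then have "card (insert x ?S) = card ?S + 1" using x by simp
    ultimately have "card ?S + 1 \<le> card ?T" using card_mono[OF \<open>finite ?T\<close>] by metis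
    then show ?thesis by simp
  qed
qed

theorem lemma2:
  fixes n :: nat and E :: "nat \<Rightarrow> (nat \<times> nat) set" and d :: "nat \<Rightarrow> real" and w :: nat
  assumes "n \<ge> 2"
    and "\<And>k. E k \<subseteq> {1..n} \<times> {1..n}"
    and "inj_on d {1..n}"
    and "w \<in> {1..n}"
    and "\<And>k. k \<le> n - 2 \<Longrightarrow> \<exists>cs. output_cord {1..n} E w k cs \<and> length cs \<ge> k + 1"
  shows "\<forall>k \<le> n - 2. card {i \<in> {1..n}. d w \<in> knowledge E d (k + 1) i} \<ge> k + 2"
proof -
  let ?I = "informed {1..n} E d w"
  have informed_lower: "k + 1 \<le> card (?I k)" if "k \<le> n - 1" for k
    using that
  proof (induction k)
    case 0
    have "{w} \<subseteq> ?I 0" using assms(4) source_informed by blast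
    then show ?case using card_mono[of "?I 0" "{w}"] by (simp add: informed_def)
  next
    case (Suc k)
    have "k \<le> n - 2" using Suc.prems by simp
    then obtain cs where cord: "output_cord {1..n} E w k cs" and len: "length cs \<ge> k + 1"
      using assms(5) by blast
    have "k + 1 \<le> card (?I k)" using Suc by simp
    moreover have "min (card (?I k) + 1) (length cs + 1) \<le> card (?I (Suc k))"
      using informed_card_Suc[OF cord _ assms(4)] by simp
    ultimately show ?case using len by simp
  qed
  show ?thesis
  proof (intro allI impI)
    fix k assume "k \<le> n - 2"
    then have "k + 2 \<le> card (?I (k + 1))" using informed_lower[of "k + 1"] assms(1) by simp
    then show "k + 2 \<le> card {i \<in> {1..n}. d w \<in> knowledge E d (k + 1) i}"
      by (simp only: informed_def)
  qed
qed

end
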